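(* Let $\sigma>0$, $A>0$, $\alpha>A\sigma$, and let $f_1,f_2:\mathbb{R}\to\mathbb{R}$ each be continuous, bandlimited to $\sigma$ rad/s, with $|f_j(t)|\le A/(1+t^2)$ for all $t$. For $j=1,2$ let $g_j(t)=\alpha t+f_j(t)$ and $h_j(u)=g_j^{-1}(u)-u/\alpha$. Then $$\|h_1-h_2\|_1=\|f_1-f_2\|_1 .$$
   Context: Fourier transform convention: $\hat f(\xi)=\int_{\mathbb{R}}f(t)e^{-i2\pi\xi t}\,dt$; $f$ is bandlimited to $\sigma$ rad/s if $\hat f(\xi)=0$ for $|\xi|>\sigma/(2\pi)$. $\|\cdot\|_1$ is the $L^1(\mathbb{R})$ norm. *)

theory Defs
  imports "HOL-Analysis.Analysis"
begin

definition fourier_transform :: "(real \<Rightarrow> real) \<Rightarrow> real \<Rightarrow> complex" where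
  "fourier_transform f \<xi> =
     (LINT t|lborel. complex_of_real (f t) * cis (- 2 * pi * \<xi> * t))"

definition bandlimited :: "real \<Rightarrow> (real \<Rightarrow> real) \<Rightarrow> bool" where
  "bandlimited \<sigma> f \<longleftrightarrow> (\<forall>\<xi>. \<bar>\<xi>\<bar> > \<sigma> / (2 * pi) \<longrightarrow> fourier_transform f \<xi> = 0)"

definition L1_norm :: "(real \<Rightarrow> real) \<Rightarrow> ennreal" where
  "L1_norm f = (\<integral>\<^sup>+ t. ennreal \<bar>f t\<bar> \<partial>lborel)"

end

theory Submission
  imports Defs "HOL-Probability.Levy"
begin

text \<open>
  The terms \<open>u/\<alpha>\<close> cancel, so the claim compares the L1 distance
  of \<open>g\<^sub>1\<^sup>-\<^sup>1, g\<^sub>2\<^sup>-\<^sup>1\<close> with that of \<open>g\<^sub>1, g\<^sub>2\<close>. For increasing bijections of the line both are the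
  area of the region between the two graphs, sliced horizontally resp. vertically (Tonelli).
  Each \<open>g\<^sub>j\<close> is an increasing bijection because \<open>f\<^sub>j\<close> is Lipschitz with constant \<open>\<sigma>' A < \<alpha>\<close>
  for any \<open>\<sigma>' > \<sigma>\<close>: this is Bernstein's inequality for bandlimited functions, obtained from
  Boas' formula, which writes differentiation on the band as an absolutely convergent
  combination of translations whose coefficients come from the Fourier series of the
  triangle wave; Fourier uniqueness transfers the identity from the spectrum to \<open>f\<close>.
\<close>

section \<open>The L1 distance of inverse functions\<close>

lemma nn_integral_pos_diff_inv:
  fixes g1 g2 :: "real \<Rightarrow> real"
  assumes m1: "strict_mono g1" and m2: "strict_mono g2" and s1: "surj g1" and s2: "surj g2"
  shows "(\<integral>\<^sup>+t. ennreal (max 0 (g2 t - g1 t)) \<partial>lborel)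
       = (\<integral>\<^sup>+u. ennreal (max 0 (inv g1 u - inv g2 u)) \<partial>lborel)"
proof -
  have le_iff: "g1 t \<le> u \<longleftrightarrow> t \<le> inv g1 u" for t u
    using strict_mono_less_eq[OF m1, of t "inv g1 u"] s1 by (simp add: surj_f_inv_f)
  have less_iff: "u < g2 t \<longleftrightarrow> inv g2 u < t" for t u
    using strict_mono_less[OF m2, of "inv g2 u" t] s2 by (simp add: surj_f_inv_f)
  have [measurable]: "g1 \<in> borel_measurable borel" "g2 \<in> borel_measurable borel"
    using m1 m2 by (auto intro: borel_measurable_mono strict_mono_mono)
  define S where "S = {p::real \<times> real. g1 (fst p) \<le> snd p \<and> snd p < g2 (fst p)}"
  have "Measurable.pred (lborel \<Otimes>\<^sub>M lborel) (\<lambda>p::real \<times> real. g1 (fst p) \<le> snd p \<and> snd p < g2 (fst p))"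
    by measurable
  then have S_sets: "S \<in> sets (lborel \<Otimes>\<^sub>M lborel)"
    unfolding S_def pred_def by (simp add: space_pair_measure)
  have "(\<integral>\<^sup>+t. ennreal (max 0 (g2 t - g1 t)) \<partial>lborel)
      = (\<integral>\<^sup>+t. (\<integral>\<^sup>+u. indicator S (t, u) \<partial>lborel) \<partial>lborel)"
  proof (intro nn_integral_cong)
    fix t
    have "(\<lambda>u. indicator S (t, u) :: ennreal) = indicator {g1 t..<g2 t}"
      by (auto simp: S_def indicator_def)
    then show "ennreal (max 0 (g2 t - g1 t)) = (\<integral>\<^sup>+u. indicator S (t, u) \<partial>lborel)"
      by (cases "g1 t \<le> g2 t") (auto simp: max_def)
  qed
  also have "\<dots> = (\<integral>\<^sup>+u. (\<integral>\<^sup>+t. indicator S (t, u) \<partial>lborel) \<partial>lborel)"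
    by (rule lborel_pair.Fubini'[symmetric]) (use S_sets in simp)
  also have "\<dots> = (\<integral>\<^sup>+u. ennreal (max 0 (inv g1 u - inv g2 u)) \<partial>lborel)"
  proof (intro nn_integral_cong)
    fix u
    have "(\<lambda>t. indicator S (t, u) :: ennreal) = indicator {inv g2 u<..inv g1 u}"
      by (auto simp: S_def indicator_def le_iff less_iff)
    then show "(\<integral>\<^sup>+t. indicator S (t, u) \<partial>lborel) = ennreal (max 0 (inv g1 u - inv g2 u))"
      by (cases "inv g2 u \<le> inv g1 u") (auto simp: max_def)
  qed
  finally show ?thesis .
qed

lemma nn_integral_abs_diff_inv:
  fixes g1 g2 :: "real \<Rightarrow> real"
  assumes m1: "strict_mono g1" and m2: "strict_mono g2" and s1: "surj g1" and s2: "surj g2"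
  shows "(\<integral>\<^sup>+u. ennreal \<bar>inv g1 u - inv g2 u\<bar> \<partial>lborel)
       = (\<integral>\<^sup>+t. ennreal \<bar>g1 t - g2 t\<bar> \<partial>lborel)"
proof -
  have "strict_mono (inv g1)" "strict_mono (inv g2)"
    using strict_mono_inv[OF m1 s1] strict_mono_inv[OF m2 s2]
      strict_mono_imp_inj_on[OF m1] strict_mono_imp_inj_on[OF m2] by auto
  then have [measurable]: "g1 \<in> borel_measurable borel" "g2 \<in> borel_measurable borel"
    "inv g1 \<in> borel_measurable borel" "inv g2 \<in> borel_measurable borel"
    using m1 m2 by (auto intro: borel_measurable_mono strict_mono_mono)
  have abs_split: "ennreal \<bar>a - b\<bar> = ennreal (max 0 (a - b)) + ennreal (max 0 (b - a))" for a b :: real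
    by (cases "a \<le> b") (auto simp: max_def)
  have "(\<integral>\<^sup>+t. ennreal \<bar>g1 t - g2 t\<bar> \<partial>lborel)
     = (\<integral>\<^sup>+t. ennreal (max 0 (g2 t - g1 t)) \<partial>lborel) + (\<integral>\<^sup>+t. ennreal (max 0 (g1 t - g2 t)) \<partial>lborel)"
    by (subst abs_split) (subst nn_integral_add; simp add: add.commute)
  also have "\<dots> = (\<integral>\<^sup>+u. ennreal (max 0 (inv g1 u - inv g2 u)) \<partial>lborel)
      + (\<integral>\<^sup>+u. ennreal (max 0 (inv g2 u - inv g1 u)) \<partial>lborel)"
    using nn_integral_pos_diff_inv[OF m1 m2 s1 s2] nn_integral_pos_diff_inv[OF m2 m1 s2 s1] by simp
  also have "\<dots> = (\<integral>\<^sup>+u. ennreal \<bar>inv g1 u - inv g2 u\<bar> \<partial>lborel)"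
    by (subst abs_split) (subst nn_integral_add; simp)
  finally show ?thesis by simp
qed


section \<open>The triangle wave series\<close>

lemma cos_times_alternating_odd_sines:
  fixes y :: real
  shows "2 * cos y * (\<Sum>k<N. (-1)^k * sin ((2 * real k + 1) * y)) = - ((-1)^N * sin (2 * real N * y))"
proof (induction N)
  case 0 then show ?case by simp
next
  case (Suc N)
  have prod_to_sum: "2 * cos y * sin a = sin (a + y) + sin (a - y)" for a
    by (simp add: sin_add sin_diff)
  have "2 * cos y * sin ((2 * real N + 1) * y) = sin (2 * real (Suc N) * y) + sin (2 * real N * y)"
    using prod_to_sum[of "(2 * real N + 1) * y"] by (simp add: algebra_simps)
  then show ?case
    using Suc by (simp add: algebra_simps)
qed

lemma oscillating_quotient_approx_antiderivative:
  assumes c: "0 \<le> c" "c < pi / 2" and N: "N \<ge> 1"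
  obtains G G' where "\<And>y. \<bar>y\<bar> \<le> c \<Longrightarrow> (G has_real_derivative G' y) (at y)"
    and "\<And>y. \<bar>y\<bar> \<le> c \<Longrightarrow>
           \<bar>(-1)^N * sin (2 * real N * y) / (2 * cos y) - G' y\<bar> \<le> 1 / (4 * real N * (cos c)^2)"
    and "\<And>y. \<bar>y\<bar> \<le> c \<Longrightarrow> \<bar>G y\<bar> \<le> 1 / (4 * real N * (cos c)^2)"
proof -
  \<comment> \<open>Differentiating the numerator of \<open>G\<close> gives the target; the denominator only contributes \<open>O(1/N)\<close>.\<close>
  define G where "G y = (- ((-1)^N / (4 * real N))) * (cos (2 * real N * y) / cos y)" for y
  define G' where "G' y = (-1)^N * sin (2 * real N * y) / (2 * cos y)
       - (-1)^N * cos (2 * real N * y) * sin y / (4 * real N * (cos y)^2)" for y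
  have Npos: "0 < real N" using N by simp
  have cos_c: "0 < cos c" using cos_gt_zero_pi[of c] c by simp
  have cos_y: "cos c \<le> cos y" "0 < cos y" if "\<bar>y\<bar> \<le> c" for y
    using cos_monotone_0_pi_le[of "\<bar>y\<bar>" c] that c cos_c by auto
  show thesis
  proof
    fix y assume y: "\<bar>y\<bar> \<le> c"
    then have "cos y \<noteq> 0" using cos_y[OF y] by simp
    have d_cos: "((\<lambda>y. cos (2 * real N * y)) has_real_derivative - sin (2 * real N * y) * (2 * real N)) (at y)"
      by (auto intro!: derivative_eq_intros)
    have "(G has_real_derivative (- ((-1)^N / (4 * real N))) *
        ((- sin (2 * real N * y) * (2 * real N) * cos y - cos (2 * real N * y) * (- sin y)) / (cos y * cos y))) (at y)"
      unfolding G_def by (intro DERIV_cmult DERIV_divide d_cos DERIV_cos \<open>cos y \<noteq> 0\<close>)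
    then show "(G has_real_derivative G' y) (at y)"
      by (rule DERIV_cong) (use \<open>cos y \<noteq> 0\<close> Npos in \<open>simp add: G'_def power2_eq_square field_simps\<close>)
  next
    fix y assume y: "\<bar>y\<bar> \<le> c"
    have diff_eq: "(-1)^N * sin (2 * real N * y) / (2 * cos y) - G' y
        = (-1)^N * cos (2 * real N * y) * sin y / (4 * real N * (cos y)^2)"
      by (simp add: G'_def)
    have "\<bar>(-1)^N * cos (2 * real N * y) * sin y\<bar> \<le> 1"
      by (simp add: abs_mult abs_cos_le_one abs_sin_le_one mult_le_one)
    moreover have "4 * real N * (cos c)^2 \<le> 4 * real N * (cos y)^2"
      using cos_y[OF y] cos_c Npos by (intro mult_left_mono power_mono) auto
    moreover have "0 < 4 * real N * (cos c)^2" using cos_c Npos by simp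
    ultimately show "\<bar>(-1)^N * sin (2 * real N * y) / (2 * cos y) - G' y\<bar> \<le> 1 / (4 * real N * (cos c)^2)"
      unfolding diff_eq abs_divide
      by (smt (verit) abs_of_nonneg divide_le_eq_1_pos frac_le zero_le_power2 mult_nonneg_nonneg)
  next
    fix y assume y: "\<bar>y\<bar> \<le> c"
    have "\<bar>G y\<bar> = \<bar>cos (2 * real N * y)\<bar> / (4 * real N * cos y)"
      using cos_y[OF y] Npos by (simp add: G_def abs_mult abs_divide)
    also have "\<dots> \<le> 1 / (4 * real N * cos y)"
      using cos_y[OF y] Npos by (intro divide_right_mono) (auto simp: abs_cos_le_one)
    also have "\<dots> \<le> 1 / (4 * real N * (cos c)^2)"
    proof -
      have "(cos c)^2 \<le> cos c" using cos_c cos_le_one[of c] by (simp add: power2_eq_square mult_le_cancel_left1)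
      then have "4 * real N * (cos c)^2 \<le> 4 * real N * cos y" using cos_y[OF y] Npos by simp
      then show ?thesis using cos_c Npos by (intro frac_le) auto
    qed
    finally show "\<bar>G y\<bar> \<le> 1 / (4 * real N * (cos c)^2)" .
  qed
qed

lemma alternating_odd_cos_partial_sum_bound:
  assumes c: "0 \<le> c" "c < pi / 2" and N: "N \<ge> 1" and y: "\<bar>y\<bar> \<le> c"
  shows "\<bar>(\<Sum>k<N. (-1)^k * cos ((2 * real k + 1) * y) / (2 * real k + 1))
          - (\<Sum>k<N. (-1)^k / (2 * real k + 1))\<bar> \<le> (c + 2) / (4 * real N * (cos c)^2)"
proof -
  define C where "C y = (\<Sum>k<N. (-1)^k * cos ((2 * real k + 1) * y) / (2 * real k + 1))" for y
  define \<epsilon> where "\<epsilon> = 1 / (4 * real N * (cos c)^2)"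
  obtain G G' where dG: "\<And>y. \<bar>y\<bar> \<le> c \<Longrightarrow> (G has_real_derivative G' y) (at y)"
    and dCG_bound: "\<And>y. \<bar>y\<bar> \<le> c \<Longrightarrow> \<bar>(-1)^N * sin (2 * real N * y) / (2 * cos y) - G' y\<bar> \<le> \<epsilon>"
    and G_bound: "\<And>y. \<bar>y\<bar> \<le> c \<Longrightarrow> \<bar>G y\<bar> \<le> \<epsilon>"
    using oscillating_quotient_approx_antiderivative[OF c N] unfolding \<epsilon>_def by blast
  have \<epsilon>_pos: "0 < \<epsilon>" using cos_gt_zero_pi[of c] c N by (auto simp: \<epsilon>_def)
  have dC: "(C has_real_derivative (\<Sum>k<N. - ((-1)^k * sin ((2 * real k + 1) * y)))) (at y)" for y
    unfolding C_def by (intro DERIV_sum) (auto intro!: derivative_eq_intros simp: add_pos_nonneg)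
  \<comment> \<open>The derivative of \<open>C\<close> is rapidly oscillating, and \<open>G\<close> nearly cancels it.\<close>
  have dC_eq: "(\<Sum>k<N. - ((-1)^k * sin ((2 * real k + 1) * y))) = (-1)^N * sin (2 * real N * y) / (2 * cos y)"
    if "\<bar>y\<bar> \<le> c" for y
  proof -
    have "0 < cos y" using cos_gt_zero_pi[of y] that c by (auto simp: abs_le_iff)
    then show ?thesis
      using cos_times_alternating_odd_sines[of y N] by (simp add: sum_negf field_simps)
  qed
  have "norm ((C y - G y) - (C 0 - G 0)) \<le> \<epsilon> * norm (y - 0)"
  proof (rule field_differentiable_bound[of "{-c..c}" "\<lambda>y. C y - G y"
        "\<lambda>y. (-1)^N * sin (2 * real N * y) / (2 * cos y) - G' y"])
    fix z assume "z \<in> {-c..c}"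
    then have z: "\<bar>z\<bar> \<le> c" by auto
    have "((\<lambda>y. C y - G y) has_real_derivative (-1)^N * sin (2 * real N * z) / (2 * cos z) - G' z) (at z)"
      using dC[of z] unfolding dC_eq[OF z] by (intro DERIV_diff dG z)
    then show "((\<lambda>y. C y - G y) has_field_derivative (-1)^N * sin (2 * real N * z) / (2 * cos z) - G' z)
        (at z within {-c..c})"
      by (rule has_field_derivative_at_within)
    show "norm ((-1)^N * sin (2 * real N * z) / (2 * cos z) - G' z) \<le> \<epsilon>"
      using dCG_bound[OF z] by simp
  qed (use y c in \<open>auto simp: abs_le_iff\<close>)
  then have "\<bar>(C y - G y) - (C 0 - G 0)\<bar> \<le> \<epsilon> * c"
    using y \<epsilon>_pos by (simp add: order_trans[OF _ mult_left_mono])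
  moreover have "\<bar>G y\<bar> \<le> \<epsilon>" "\<bar>G 0\<bar> \<le> \<epsilon>" using G_bound y c by auto
  ultimately have "\<bar>C y - C 0\<bar> \<le> \<epsilon> * c + 2 * \<epsilon>" by linarith
  also have "\<dots> = (c + 2) / (4 * real N * (cos c)^2)" by (simp add: \<epsilon>_def add_divide_distrib)
  finally show ?thesis by (simp add: C_def)
qed

lemma triangle_wave_partial_sum_bound:
  assumes c: "0 \<le> c" "c < pi / 2" and N: "N \<ge> 1" and x: "\<bar>x\<bar> \<le> c"
  shows "\<bar>(\<Sum>k<N. (-1)^k * sin ((2 * real k + 1) * x) / (2 * real k + 1)^2)
          - x * (\<Sum>k<N. (-1)^k / (2 * real k + 1))\<bar>
         \<le> ((c + 2) / (4 * real N * (cos c)^2)) * \<bar>x\<bar>"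
proof -
  define L where "L = (\<Sum>k<N. (-1)^k / (2 * real k + 1) :: real)"
  define C where "C y = (\<Sum>k<N. (-1)^k * cos ((2 * real k + 1) * y) / (2 * real k + 1))" for y
  define S where "S y = (\<Sum>k<N. (-1)^k * sin ((2 * real k + 1) * y) / (2 * real k + 1)^2) - y * L" for y
  have term_deriv: "((\<lambda>y. (-1)^k * sin ((2 * real k + 1) * y) / (2 * real k + 1)^2) has_real_derivative
      (-1)^k * cos ((2 * real k + 1) * y) / (2 * real k + 1)) (at y)" for k y
    by (auto intro!: derivative_eq_intros simp: power2_eq_square add_pos_nonneg)
  have dS: "(S has_real_derivative C y - L) (at y)" for y
    unfolding S_def C_def by (intro DERIV_diff DERIV_sum term_deriv) (auto intro!: derivative_eq_intros)
  have "norm (S x - S 0) \<le> ((c + 2) / (4 * real N * (cos c)^2)) * norm (x - 0)"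
  proof (rule field_differentiable_bound[of "{-c..c}" S "\<lambda>y. C y - L"])
    show "(S has_field_derivative C y - L) (at y within {-c..c})" for y
      by (rule has_field_derivative_at_within[OF dS])
    show "norm (C y - L) \<le> (c + 2) / (4 * real N * (cos c)^2)" if "y \<in> {-c..c}" for y
      using alternating_odd_cos_partial_sum_bound[OF c N, of y] that by (simp add: C_def L_def abs_le_iff)
  qed (use x c in \<open>auto simp: abs_le_iff\<close>)
  then show ?thesis by (simp add: S_def L_def)
qed

lemma leibniz_pi_sums: "(\<lambda>k. (-1)^k / (2 * real k + 1)) sums (pi / 4)"
proof -
  have "(\<lambda>k. 1 / (2 * real k + 1)) \<longlonglongrightarrow> 0"
    by (rule Lim_null_comparison[OF _ lim_1_over_n])
       (auto intro!: eventually_sequentiallyI[of 1] simp: field_simps)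
  moreover have "monoseq (\<lambda>k. 1 / (2 * real k + 1))"
    by (rule decseq_imp_monoseq) (auto simp: decseq_def intro!: divide_left_mono)
  ultimately have "summable (\<lambda>k. (-1)^k / (2 * real k + 1))"
    using summable_Leibniz(1)[of "\<lambda>k. 1 / (2 * real k + 1)"] by simp
  moreover have "pi / 4 = (\<Sum>k. (-1)^k / (2 * real k + 1))"
    using pi_series by (simp add: mult.commute add.commute)
  ultimately show ?thesis by (simp add: sums_iff)
qed

lemma triangle_wave_sums:
  assumes x: "\<bar>x\<bar> < pi / 2"
  shows "(\<lambda>k. (-1)^k * sin ((2 * real k + 1) * x) / (2 * real k + 1)^2) sums (pi / 4 * x)"
proof -
  define c where "c = \<bar>x\<bar>"
  have c: "0 \<le> c" "c < pi / 2" "\<bar>x\<bar> \<le> c" using x by (auto simp: c_def)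
  define E where "E N = (\<Sum>k<N. (-1)^k * sin ((2 * real k + 1) * x) / (2 * real k + 1)^2)
          - x * (\<Sum>k<N. (-1)^k / (2 * real k + 1))" for N
  have E_bound: "\<bar>E N\<bar> \<le> ((c + 2) / (4 * (cos c)^2) * \<bar>x\<bar>) * (1 / real N)" if "N \<ge> 1" for N
    using triangle_wave_partial_sum_bound[OF c(1,2) that c(3)] by (simp add: E_def field_simps)
  have "(\<lambda>N. ((c + 2) / (4 * (cos c)^2) * \<bar>x\<bar>) * (1 / real N)) \<longlonglongrightarrow> 0"
    by (intro tendsto_mult_right_zero lim_1_over_n)
  then have "E \<longlonglongrightarrow> 0"
    by (rule Lim_null_comparison[rotated]) (use E_bound in \<open>auto intro!: eventually_sequentiallyI[of 1]\<close>)
  moreover have "(\<lambda>N. \<Sum>k<N. (-1)^k / (2 * real k + 1)) \<longlonglongrightarrow> pi / 4"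
    using leibniz_pi_sums by (simp add: sums_def)
  ultimately have "(\<lambda>N. E N + x * (\<Sum>k<N. (-1)^k / (2 * real k + 1))) \<longlonglongrightarrow> 0 + x * (pi / 4)"
    by (intro tendsto_intros)
  then show ?thesis
    by (simp add: sums_def E_def mult.commute)
qed

lemma inverse_odd_squares_sums: "(\<lambda>k. 1 / (2 * real k + 1)^2) sums (pi^2 / 8)"
proof -
  have all: "(\<lambda>n. 1 / (real n + 1)^2) sums (pi^2 / 6)"
    using inverse_squares_sums by (simp add: add.commute)
  have "(\<lambda>k. (1/4) * (1 / (real k + 1)^2)) sums ((1/4) * (pi^2 / 6))"
    by (intro sums_mult all)
  moreover have "(\<lambda>k. (1/4) * (1 / (real k + 1)^2)) = (\<lambda>k. 1 / (2 * real k + 2)^2)"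
    by (auto simp: fun_eq_iff power2_eq_square field_simps)
  ultimately have even: "(\<lambda>k. 1 / (2 * real k + 2)^2) sums (pi^2 / 24)"
    by simp
  have "(\<lambda>k. \<Sum>n\<in>{k * 2..<k * 2 + 2}. 1 / (real n + 1)^2) sums (pi^2 / 6)"
    by (rule sums_group[OF all]) simp
  moreover have "(\<Sum>n\<in>{k * 2..<k * 2 + 2}. 1 / (real n + 1)^2) = 1 / (2 * real k + 1)^2 + 1 / (2 * real k + 2)^2" for k
  proof -
    have "{k * 2..<k * 2 + 2} = {k * 2, k * 2 + 1}" by auto
    then show ?thesis by (simp add: algebra_simps)
  qed
  ultimately have "(\<lambda>k. 1 / (2 * real k + 1)^2 + 1 / (2 * real k + 2)^2) sums (pi^2 / 6)"
    by simp
  from sums_diff[OF this even] show ?thesis by simp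
qed
section \<open>Fourier transforms of integrable functions\<close>

lemma borel_measurable_cis [measurable]: "cis \<in> borel_measurable borel"
  by (intro borel_measurable_continuous_onI continuous_on_cis continuous_on_id)

lemma integrable_mult_cis:
  fixes g :: "real \<Rightarrow> real"
  assumes g: "integrable lborel g"
  shows "integrable lborel (\<lambda>t. complex_of_real (g t) * cis (a * t))"
proof (rule Bochner_Integration.integrable_bound)
  show "integrable lborel (\<lambda>t. complex_of_real (g t))" using g by (rule integrable_of_real)
  have [measurable]: "g \<in> borel_measurable borel" using borel_measurable_integrable[OF g] by simp
  show "(\<lambda>t. complex_of_real (g t) * cis (a * t)) \<in> borel_measurable lborel" by measurable
  show "AE t in lborel. norm (complex_of_real (g t) * cis (a * t)) \<le> norm (complex_of_real (g t))"
    by (simp add: norm_mult)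
qed

lemma fourier_transform_diff:
  fixes a b :: "real \<Rightarrow> real"
  assumes "integrable lborel a" "integrable lborel b"
  shows "fourier_transform (\<lambda>t. a t - b t) \<xi> = fourier_transform a \<xi> - fourier_transform b \<xi>"
  unfolding fourier_transform_def
  by (subst Bochner_Integration.integral_diff[symmetric, OF integrable_mult_cis[OF assms(1)] integrable_mult_cis[OF assms(2)]])
     (auto simp: algebra_simps intro!: Bochner_Integration.integral_cong)

lemma integrable_lborel_shift:
  fixes g :: "real \<Rightarrow> real"
  assumes "integrable lborel g"
  shows "integrable lborel (\<lambda>t. g (t + c))"
  using lborel_integrable_real_affine[OF assms, of 1 c] by (simp add: add.commute)

lemma integral_abs_shift:
  fixes g :: "real \<Rightarrow> real"
  shows "(LINT t|lborel. \<bar>g (t + c)\<bar>) = (LINT t|lborel. \<bar>g t\<bar>)"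
  using lborel_integral_real_affine[of 1 "\<lambda>t. \<bar>g t\<bar>" c] by (simp add: add.commute)

lemma fourier_transform_shift:
  fixes g :: "real \<Rightarrow> real"
  shows "fourier_transform (\<lambda>t. g (t + b)) \<xi> = cis (2 * pi * \<xi> * b) * fourier_transform g \<xi>"
proof -
  define G where "G y = complex_of_real (g y) * cis (- 2 * pi * \<xi> * (y - b))" for y
  have "(LINT y|lborel. G y) = \<bar>1::real\<bar> *\<^sub>R (LINT x|lborel. G (b + 1 * x))"
    by (rule lborel_integral_real_affine) simp
  then have "(LINT t|lborel. complex_of_real (g (t + b)) * cis (- 2 * pi * \<xi> * t)) = (LINT y|lborel. G y)"
    by (simp add: G_def add.commute)
  also have "\<dots> = (LINT y|lborel. cis (2 * pi * \<xi> * b) * (complex_of_real (g y) * cis (- 2 * pi * \<xi> * y)))"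
    by (intro Bochner_Integration.integral_cong) (auto simp: G_def cis_mult algebra_simps)
  finally show ?thesis
    unfolding fourier_transform_def by simp
qed

lemma real_distribution_density_normalized:
  fixes p :: "real \<Rightarrow> real"
  assumes p_int [measurable]: "integrable lborel p" and p: "\<And>x. 0 \<le> p x" and c: "(LINT x|lborel. p x) = c" "0 < c"
  shows "real_distribution (density lborel (\<lambda>x. ennreal (p x / c)))"
proof -
  have "(\<integral>\<^sup>+x. ennreal (p x / c) \<partial>lborel) = ennreal (LINT x|lborel. p x / c)"
    using c p p_int by (intro nn_integral_eq_integral) (auto intro!: integrable_divide)
  also have "\<dots> = 1" using c by simp
  finally have "prob_space (density lborel (\<lambda>x. ennreal (p x / c)))"
    by (intro prob_spaceI) (simp add: emeasure_density)
  then show ?thesis unfolding real_distribution_def real_distribution_axioms_def by simp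
qed

lemma char_density_normalized:
  fixes p :: "real \<Rightarrow> real"
  assumes [measurable]: "integrable lborel p" and p: "\<And>x. 0 \<le> p x" and c: "0 < c"
  shows "char (density lborel (\<lambda>x. ennreal (p x / c))) t
       = (CLINT x|lborel. complex_of_real (p x) * iexp (t * x)) / c"
proof -
  have "char (density lborel (\<lambda>x. ennreal (p x / c))) t = (CLINT x|lborel. (p x / c) *\<^sub>R iexp (t * x))"
    unfolding char_def by (subst integral_density) (use p c in auto)
  also have "\<dots> = (CLINT x|lborel. complex_of_real (p x) * iexp (t * x) / c)"
    by (intro Bochner_Integration.integral_cong) (auto simp: scaleR_conv_of_real)
  finally show ?thesis by simp
qed

lemma AE_eq_if_char_integrals_eq:
  fixes p q :: "real \<Rightarrow> real"
  assumes p_int: "integrable lborel p" and q_int: "integrable lborel q"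
    and p: "\<And>x. 0 \<le> p x" and q: "\<And>x. 0 \<le> q x"
    and eq: "\<And>t. (CLINT x|lborel. complex_of_real (p x) * iexp (t * x))
                 = (CLINT x|lborel. complex_of_real (q x) * iexp (t * x))"
  shows "AE x in lborel. p x = q x"
proof -
  have [measurable]: "p \<in> borel_measurable borel" "q \<in> borel_measurable borel"
    using borel_measurable_integrable[OF p_int] borel_measurable_integrable[OF q_int] by auto
  define c where "c = (LINT x|lborel. p x)"
  have "complex_of_real c = complex_of_real (LINT x|lborel. q x)"
    using eq[of 0] unfolding c_def by simp
  then have cq: "c = (LINT x|lborel. q x)" by simp
  have "0 \<le> c" unfolding c_def by (intro integral_nonneg_AE) (simp add: p)
  then consider "c = 0" | "0 < c" by linarith
  then show ?thesis
  proof cases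
    case 1
    have "AE x in lborel. p x = 0"
      using 1 unfolding c_def by (subst integral_nonneg_eq_0_iff_AE[symmetric]) (auto simp: p p_int)
    moreover have "AE x in lborel. q x = 0"
      using 1 unfolding cq by (subst integral_nonneg_eq_0_iff_AE[symmetric]) (auto simp: q q_int)
    ultimately show ?thesis by eventually_elim simp
  next
    case 2
    have "char (density lborel (\<lambda>x. ennreal (p x / c))) = char (density lborel (\<lambda>x. ennreal (q x / c)))"
      unfolding fun_eq_iff char_density_normalized[OF p_int p 2] char_density_normalized[OF q_int q 2] eq by simp
    from Levy_uniqueness[OF real_distribution_density_normalized[OF p_int p c_def[symmetric] 2]
          real_distribution_density_normalized[OF q_int q cq[symmetric] 2] this]
    have "AE x in lborel. ennreal (p x / c) = ennreal (q x / c)"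
      by (subst sigma_finite_measure.density_unique_iff[OF sigma_finite_lborel, symmetric]) auto
    then show ?thesis
      by eventually_elim (use 2 p q in auto)
  qed
qed

lemma fourier_transform_eq_0_imp_AE_0:
  fixes u :: "real \<Rightarrow> real"
  assumes u: "integrable lborel u" and ft: "\<And>\<xi>. fourier_transform u \<xi> = 0"
  shows "AE t in lborel. u t = 0"
proof -
  define p where "p t = max 0 (u t)" for t
  define n where "n t = max 0 (- u t)" for t
  have p_int: "integrable lborel p" and n_int: "integrable lborel n"
    unfolding p_def n_def using u by (auto intro!: integrable_max)
  have u_eq: "u t = p t - n t" for t by (auto simp: p_def n_def)
  have "(CLINT x|lborel. complex_of_real (p x) * iexp (t * x))
      = (CLINT x|lborel. complex_of_real (n x) * iexp (t * x))" for t
  proof -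
    have iexp_cis: "iexp (t * x) = cis (- 2 * pi * (- t / (2 * pi)) * x)" for x
      by (simp add: cis_conv_exp)
    have "(CLINT x|lborel. complex_of_real (p x) * iexp (t * x))
        - (CLINT x|lborel. complex_of_real (n x) * iexp (t * x))
        = (CLINT x|lborel. complex_of_real (u x) * iexp (t * x))"
      unfolding iexp_cis
      by (subst Bochner_Integration.integral_diff[symmetric, OF integrable_mult_cis[OF p_int] integrable_mult_cis[OF n_int]])
         (auto intro!: Bochner_Integration.integral_cong simp: u_eq algebra_simps)
    also have "\<dots> = 0"
      using ft[of "- t / (2 * pi)"] unfolding fourier_transform_def by (simp only: iexp_cis)
    finally show ?thesis by simp
  qed
  then have "AE x in lborel. p x = n x"
    by (intro AE_eq_if_char_integrals_eq p_int n_int) (auto simp: p_def n_def)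
  then show ?thesis by eventually_elim (simp add: u_eq)
qed

lemma integrable_indicator_Icc_mult: "integrable lborel (\<lambda>x::real. indicator {0..h} x * (c::real))"
proof -
  have "emeasure lborel {0..h} < \<infinity>"
    by (cases "0 \<le> h") auto
  then show ?thesis by (intro integrable_mult_left integrable_real_indicator) auto
qed


lemma integrable_window_translates:
  fixes P :: "real \<Rightarrow> real"
  assumes P: "integrable lborel P"
  shows "integrable (lborel \<Otimes>\<^sub>M lborel) (\<lambda>(\<tau>, t). indicator {0..h} \<tau> * P (t + \<tau>))"
proof (rule lborel_pair.Fubini_integrable)
  have [measurable]: "P \<in> borel_measurable borel" using borel_measurable_integrable[OF P] by simp
  show "(\<lambda>(\<tau>, t). indicator {0..h} \<tau> * P (t + \<tau>)) \<in> borel_measurable (lborel \<Otimes>\<^sub>M lborel)"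
    by measurable
  have "(LINT t|lborel. norm (indicator {0..h} \<tau> * P (t + \<tau>))) = indicator {0..h} \<tau> * (LINT t|lborel. \<bar>P t\<bar>)"
    for \<tau> :: real
    by (simp add: abs_mult integral_abs_shift)
  then show "integrable lborel (\<lambda>\<tau>. LINT t|lborel. norm (case (\<tau>, t) of (\<tau>, t) \<Rightarrow> indicator {0..h} \<tau> * P (t + \<tau>)))"
    using integrable_indicator_Icc_mult by simp
  show "AE \<tau> in lborel. integrable lborel (\<lambda>t. case (\<tau>, t) of (\<tau>, t) \<Rightarrow> indicator {0..h} \<tau> * P (t + \<tau>))"
    using integrable_lborel_shift[OF P] by (auto intro!: integrable_mult_right)
qed

lemma integrable_moving_integral:
  fixes P :: "real \<Rightarrow> real"
  assumes "integrable lborel P"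
  shows "integrable lborel (\<lambda>t. LINT \<tau>|lborel. indicator {0..h} \<tau> * P (t + \<tau>))"
  using lborel_pair.integrable_snd[OF integrable_window_translates[OF assms]] by simp

lemma fourier_transform_moving_integral:
  fixes P :: "real \<Rightarrow> real"
  assumes P: "integrable lborel P"
  shows "fourier_transform (\<lambda>t. LINT \<tau>|lborel. indicator {0..h} \<tau> * P (t + \<tau>)) \<xi>
       = (CLINT \<tau>|lborel. indicator {0..h} \<tau> * cis (2 * pi * \<xi> * \<tau>)) * fourier_transform P \<xi>"
proof -
  have [measurable]: "P \<in> borel_measurable borel" using borel_measurable_integrable[OF P] by simp
  define H where "H \<tau> t = complex_of_real (indicator {0..h} \<tau> * P (t + \<tau>)) * cis (- 2 * pi * \<xi> * t)"
    for \<tau> t :: real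
  have H: "integrable (lborel \<Otimes>\<^sub>M lborel) (\<lambda>(\<tau>, t). H \<tau> t)"
  proof (rule Bochner_Integration.integrable_bound)
    show "integrable (lborel \<Otimes>\<^sub>M lborel)
        (\<lambda>x. complex_of_real (case x of (\<tau>, t) \<Rightarrow> indicator {0..h} \<tau> * P (t + \<tau>)))"
      using integrable_window_translates[OF P] by (rule integrable_of_real)
    show "(\<lambda>(\<tau>, t). H \<tau> t) \<in> borel_measurable (lborel \<Otimes>\<^sub>M lborel)"
      unfolding H_def by measurable
  qed (auto simp: H_def norm_mult)
  have "fourier_transform (\<lambda>t. LINT \<tau>|lborel. indicator {0..h} \<tau> * P (t + \<tau>)) \<xi>
      = (CLINT t|lborel. (CLINT \<tau>|lborel. H \<tau> t))"
    unfolding fourier_transform_def H_def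
    by (intro Bochner_Integration.integral_cong refl) (simp del: of_real_mult)
  also have "\<dots> = (CLINT \<tau>|lborel. (CLINT t|lborel. H \<tau> t))"
    using lborel_pair.Fubini_integral[OF H] .
  also have "\<dots> = (CLINT \<tau>|lborel. indicator {0..h} \<tau> * cis (2 * pi * \<xi> * \<tau>) * fourier_transform P \<xi>)"
  proof (intro Bochner_Integration.integral_cong refl)
    fix \<tau>
    have "(CLINT t|lborel. H \<tau> t) = indicator {0..h} \<tau> * fourier_transform (\<lambda>t. P (t + \<tau>)) \<xi>"
      unfolding H_def fourier_transform_def
      by (simp del: integral_mult_right_zero add: integral_mult_right_zero[symmetric] mult.assoc indicator_def)
    then show "(CLINT t|lborel. H \<tau> t) = indicator {0..h} \<tau> * cis (2 * pi * \<xi> * \<tau>) * fourier_transform P \<xi>"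
      by (simp add: fourier_transform_shift mult.assoc)
  qed
  finally show ?thesis by simp
qed

lemma abs_moving_integral_le:
  fixes P :: "real \<Rightarrow> real"
  assumes P: "integrable lborel P" and bound: "\<And>x. \<bar>P x\<bar> \<le> M" and h: "0 \<le> h"
  shows "\<bar>LINT \<tau>|lborel. indicator {0..h} \<tau> * P (t + \<tau>)\<bar> \<le> h * M"
proof -
  have "integrable lborel (\<lambda>\<tau>. indicator {0..h} \<tau> * P (t + \<tau>))"
    using integrable_real_mult_indicator[OF _ integrable_lborel_shift[OF P, where c=t], of "{0..h}"]
    by (simp add: mult.commute add.commute)
  then have "\<bar>LINT \<tau>|lborel. indicator {0..h} \<tau> * P (t + \<tau>)\<bar> \<le> (LINT \<tau>|lborel. indicator {0..h} \<tau> * M)"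
    by (rule integral_abs_bound_integral[OF _ integrable_indicator_Icc_mult])
       (auto simp: indicator_def bound)
  also have "\<dots> = h * M"
    using h by (simp add: measure_def)
  finally show ?thesis .
qed

lemma times_integral_indicator_Icc_cis:
  assumes h: "0 \<le> h"
  shows "(2 * pi * \<i> * complex_of_real \<xi>) * (CLINT \<tau>|lborel. indicator {0..h} \<tau> * cis (2 * pi * \<xi> * \<tau>))
       = cis (2 * pi * \<xi> * h) - 1"
proof (cases "\<xi> = 0")
  case True then show ?thesis by simp
next
  case False
  define c where "c = complex_of_real (2 * pi * \<xi>)"
  have c: "c \<noteq> 0" using False by (simp add: c_def)
  define g where "g z = exp (\<i> * c * z) / (\<i> * c)" for z
  have cis_eq: "cis (2 * pi * \<xi> * \<tau>) = exp (\<i> * c * complex_of_real \<tau>)" for \<tau>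
    by (simp add: cis_conv_exp c_def mult_ac)
  have "(CLINT \<tau>|lborel. indicator {0..h} \<tau> * cis (2 * pi * \<xi> * \<tau>))
      = (CLBINT \<tau>=ereal 0..ereal h. cis (2 * pi * \<xi> * \<tau>))"
    unfolding interval_integral_Icc[OF h] set_lebesgue_integral_def
    by (intro Bochner_Integration.integral_cong) (auto simp: indicator_def)
  also have "\<dots> = g (complex_of_real h) - g (complex_of_real 0)"
  proof (rule interval_integral_FTC_finite)
    show "continuous_on {min 0 h..max 0 h} (\<lambda>\<tau>. cis (2 * pi * \<xi> * \<tau>))"
      by (intro continuous_intros)
    fix x
    have "(g has_field_derivative exp (\<i> * c * complex_of_real x)) (at (complex_of_real x))"
      unfolding g_def using c by (auto intro!: derivative_eq_intros simp: field_simps)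
    from has_vector_derivative_real_field[OF this]
    show "((\<lambda>\<tau>. g (complex_of_real \<tau>)) has_vector_derivative cis (2 * pi * \<xi> * x)) (at x within {min 0 h..max 0 h})"
      by (simp add: cis_eq)
  qed
  moreover have "2 * pi * \<i> * complex_of_real \<xi> = \<i> * c" by (simp add: c_def mult_ac)
  ultimately show ?thesis
    using c unfolding cis_eq[of h] by (simp add: g_def field_simps)
qed


section \<open>Boas' formula and Bernstein's inequality\<close>

text \<open>
  At \<open>x = \<pi>\<xi> / (2S)\<close> the triangle wave series gives, for \<open>|\<xi>| < S\<close>,
  \<open>2\<pi>i\<xi> = \<Sum>\<^sub>k w\<^sub>k (cis (2\<pi>\<xi>b\<^sub>k) - cis (-2\<pi>\<xi>b\<^sub>k))\<close> with nodes \<open>b\<^sub>k = (2k+1)/(4S)\<close> and weights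
  \<open>w\<^sub>k = 8S(-1)\<^sup>k / (\<pi>(2k+1)\<^sup>2)\<close>, where \<open>\<Sum>\<^sub>k |w\<^sub>k| = \<pi>S\<close>. Hence \<open>boas_operator S\<close> multiplies the
  spectrum of \<open>f\<close> by \<open>2\<pi>i\<xi>\<close> on \<open>|\<xi>| < S\<close>, i.e. acts as \<open>f'\<close> there, and has sup norm at most \<open>2\<pi>S\<close>.
\<close>

definition boas_node :: "real \<Rightarrow> nat \<Rightarrow> real" where
  "boas_node S k = (2 * real k + 1) / (4 * S)"

definition boas_weight :: "real \<Rightarrow> nat \<Rightarrow> real" where
  "boas_weight S k = (8 * S / pi) * ((-1)^k / (2 * real k + 1)^2)"

definition boas_multiplier :: "real \<Rightarrow> real \<Rightarrow> complex" where
  "boas_multiplier S \<xi> = (\<Sum>k. complex_of_real (boas_weight S k) *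
     (cis (2 * pi * \<xi> * boas_node S k) - cis (- (2 * pi * \<xi> * boas_node S k))))"

definition boas_operator :: "real \<Rightarrow> (real \<Rightarrow> real) \<Rightarrow> real \<Rightarrow> real" where
  "boas_operator S f t = (\<Sum>k. boas_weight S k * (f (t + boas_node S k) - f (t - boas_node S k)))"

lemma abs_boas_weight_sums:
  assumes "0 < S"
  shows "(\<lambda>k. \<bar>boas_weight S k\<bar>) sums (pi * S)"
proof -
  have "(\<lambda>k. (8 * S / pi) * (1 / (2 * real k + 1)^2)) sums ((8 * S / pi) * (pi^2 / 8))"
    by (intro sums_mult inverse_odd_squares_sums)
  moreover have "(\<lambda>k. \<bar>boas_weight S k\<bar>) = (\<lambda>k. (8 * S / pi) * (1 / (2 * real k + 1)^2))"
    using assms by (auto simp: boas_weight_def abs_mult abs_divide fun_eq_iff)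
  moreover have "(8 * S / pi) * (pi^2 / 8) = pi * S" by (simp add: power2_eq_square)
  ultimately show ?thesis by simp
qed

lemma summable_boas_weight_times_bounded:
  assumes S: "0 < S" and bound: "\<And>k. \<bar>a k\<bar> \<le> B"
  shows "summable (\<lambda>k. \<bar>boas_weight S k * a k\<bar>)"
proof (rule summable_comparison_test')
  show "summable (\<lambda>k. \<bar>boas_weight S k\<bar> * B)"
    using abs_boas_weight_sums[OF S] by (intro summable_mult2) (simp add: sums_iff)
  show "norm \<bar>boas_weight S k * a k\<bar> \<le> \<bar>boas_weight S k\<bar> * B" for k
    using bound[of k] by (simp add: abs_mult mult_left_mono)
qed

lemma boas_weight_sin_sums:
  assumes S: "0 < S" and \<xi>: "\<bar>\<xi>\<bar> < S"
  shows "(\<lambda>k. boas_weight S k * sin (2 * pi * \<xi> * boas_node S k)) sums (pi * \<xi>)"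
proof -
  define x where "x = pi * \<xi> / (2 * S)"
  have "\<bar>x\<bar> < pi / 2"
    using S \<xi> by (auto simp: x_def abs_divide abs_mult field_simps)
  from sums_mult[OF triangle_wave_sums[OF this], of "8 * S / pi"]
  have "(\<lambda>k. (8 * S / pi) * ((-1)^k * sin ((2 * real k + 1) * x) / (2 * real k + 1)^2))
        sums ((8 * S / pi) * (pi / 4 * x))" .
  moreover have "(8 * S / pi) * (pi / 4 * x) = pi * \<xi>" using S by (simp add: x_def field_simps)
  moreover have "(2 * real k + 1) * x = 2 * pi * \<xi> * boas_node S k" for k
    using S by (simp add: x_def boas_node_def field_simps)
  ultimately show ?thesis
    by (simp add: boas_weight_def mult.assoc)
qed

lemma boas_multiplier_eq:
  assumes S: "0 < S" and \<xi>: "\<bar>\<xi>\<bar> < S"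
  shows "boas_multiplier S \<xi> = 2 * pi * \<i> * complex_of_real \<xi>"
proof -
  have cis_diff: "cis t - cis (- t) = 2 * \<i> * complex_of_real (sin t)" for t
    by (simp add: complex_eq_iff)
  have "(\<lambda>k. complex_of_real (boas_weight S k * sin (2 * pi * \<xi> * boas_node S k)))
      sums complex_of_real (pi * \<xi>)"
    using boas_weight_sin_sums[OF S \<xi>] by (rule sums_of_real)
  from sums_mult[OF this, of "2 * \<i>"]
  have "(\<lambda>k. complex_of_real (boas_weight S k) *
      (cis (2 * pi * \<xi> * boas_node S k) - cis (- (2 * pi * \<xi> * boas_node S k))))
        sums (2 * \<i> * complex_of_real (pi * \<xi>))"
    by (simp add: cis_diff mult_ac)
  then show ?thesis unfolding boas_multiplier_def by (simp add: sums_iff mult_ac)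
qed

lemma abs_shift_diff_le:
  fixes f :: "real \<Rightarrow> real"
  assumes "\<And>x. \<bar>f x\<bar> \<le> B"
  shows "\<bar>f (t + b) - f (t - b)\<bar> \<le> 2 * B"
  using assms[of "t + b"] assms[of "t - b"] by linarith

lemma summable_abs_boas_terms:
  assumes S: "0 < S" and bound: "\<And>x. \<bar>f x\<bar> \<le> B"
  shows "summable (\<lambda>k. \<bar>boas_weight S k * (f (t + boas_node S k) - f (t - boas_node S k))\<bar>)"
  by (rule summable_boas_weight_times_bounded[OF S abs_shift_diff_le[OF bound]])

lemma abs_boas_operator_le:
  assumes S: "0 < S" and bound: "\<And>x. \<bar>f x\<bar> \<le> B"
  shows "\<bar>boas_operator S f t\<bar> \<le> 2 * pi * S * B"
proof -
  have term_bound: "\<bar>f (t + boas_node S k) - f (t - boas_node S k)\<bar> \<le> 2 * B" for k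
    by (rule abs_shift_diff_le[OF bound])
  have summable: "summable (\<lambda>k. \<bar>boas_weight S k * (f (t + boas_node S k) - f (t - boas_node S k))\<bar>)"
    by (rule summable_abs_boas_terms[OF S bound])
  have "\<bar>boas_operator S f t\<bar> \<le> (\<Sum>k. \<bar>boas_weight S k * (f (t + boas_node S k) - f (t - boas_node S k))\<bar>)"
    unfolding boas_operator_def by (rule summable_rabs[OF summable])
  also have "\<dots> \<le> (\<Sum>k. \<bar>boas_weight S k\<bar> * (2 * B))"
    using summable sums_mult2[OF abs_boas_weight_sums[OF S]] term_bound
    by (intro suminf_le) (auto simp: sums_iff abs_mult intro: mult_left_mono)
  also have "\<dots> = 2 * pi * S * B"
    using sums_mult2[OF abs_boas_weight_sums[OF S], of "2 * B"] by (simp add: sums_iff)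
  finally show ?thesis .
qed

lemma integrable_boas_term:
  assumes f: "integrable lborel f"
  shows "integrable lborel (\<lambda>t. boas_weight S k * (f (t + boas_node S k) - f (t - boas_node S k)))"
proof -
  have "integrable lborel (\<lambda>t. f (t - boas_node S k))"
    using integrable_lborel_shift[OF f, of "- boas_node S k"] by simp
  then show ?thesis
    using integrable_lborel_shift[OF f, of "boas_node S k"]
    by (intro integrable_mult_right Bochner_Integration.integrable_diff)
qed

lemma summable_L1_boas_terms:
  assumes S: "0 < S" and f: "integrable lborel f"
  shows "summable (\<lambda>k. LINT t|lborel. \<bar>boas_weight S k * (f (t + boas_node S k) - f (t - boas_node S k))\<bar>)"
proof (rule summable_comparison_test')
  show "summable (\<lambda>k. \<bar>boas_weight S k\<bar> * (2 * (LINT t|lborel. \<bar>f t\<bar>)))"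
    using abs_boas_weight_sums[OF S] by (intro summable_mult2) (simp add: sums_iff)
  fix k
  have i1: "integrable lborel (\<lambda>t. f (t + boas_node S k))"
    using integrable_lborel_shift[OF f] by auto
  have i2: "integrable lborel (\<lambda>t. f (t - boas_node S k))"
    using integrable_lborel_shift[OF f, of "- boas_node S k"] by simp
  have "(LINT t|lborel. \<bar>boas_weight S k * (f (t + boas_node S k) - f (t - boas_node S k))\<bar>)
      \<le> (LINT t|lborel. \<bar>boas_weight S k\<bar> * (\<bar>f (t + boas_node S k)\<bar> + \<bar>f (t - boas_node S k)\<bar>))"
    using i1 i2 integrable_boas_term[OF f, of S k]
    by (intro integral_mono) (auto simp: abs_mult intro!: mult_left_mono)
  also have "\<dots> = \<bar>boas_weight S k\<bar> * ((LINT t|lborel. \<bar>f (t + boas_node S k)\<bar>) + (LINT t|lborel. \<bar>f (t - boas_node S k)\<bar>))"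
    using i1 i2 by (simp add: Bochner_Integration.integral_add)
  also have "\<dots> = \<bar>boas_weight S k\<bar> * (2 * (LINT t|lborel. \<bar>f t\<bar>))"
    using integral_abs_shift[of f "boas_node S k"] integral_abs_shift[of f "- boas_node S k"] by simp
  finally show "norm (LINT t|lborel. \<bar>boas_weight S k * (f (t + boas_node S k) - f (t - boas_node S k))\<bar>)
      \<le> \<bar>boas_weight S k\<bar> * (2 * (LINT t|lborel. \<bar>f t\<bar>))"
    by (simp add: integral_nonneg_AE)
qed

lemma integrable_boas_operator:
  assumes S: "0 < S" and f: "integrable lborel f" and bound: "\<And>x. \<bar>f x\<bar> \<le> B"
  shows "integrable lborel (boas_operator S f)"
  unfolding boas_operator_def[abs_def]
proof (rule integrable_suminf)
  show "integrable lborel (\<lambda>t. boas_weight S k * (f (t + boas_node S k) - f (t - boas_node S k)))" for k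
    by (rule integrable_boas_term[OF f])
  show "AE t in lborel. summable (\<lambda>k. norm (boas_weight S k * (f (t + boas_node S k) - f (t - boas_node S k))))"
    unfolding real_norm_def by (intro AE_I2 summable_abs_boas_terms[OF S bound])
  show "summable (\<lambda>k. LINT t|lborel. norm (boas_weight S k * (f (t + boas_node S k) - f (t - boas_node S k))))"
    using summable_L1_boas_terms[OF S f] by simp
qed

lemma summable_boas_multiplier:
  assumes S: "0 < S"
  shows "summable (\<lambda>k. complex_of_real (boas_weight S k) *
           (cis (2 * pi * \<xi> * boas_node S k) - cis (- (2 * pi * \<xi> * boas_node S k))))"
proof (rule summable_comparison_test')
  show "summable (\<lambda>k. \<bar>boas_weight S k\<bar> * 2)"
    using abs_boas_weight_sums[OF S] by (intro summable_mult2) (simp add: sums_iff)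
  show "norm (complex_of_real (boas_weight S k) *
      (cis (2 * pi * \<xi> * boas_node S k) - cis (- (2 * pi * \<xi> * boas_node S k)))) \<le> \<bar>boas_weight S k\<bar> * 2" for k
    using norm_triangle_ineq4[of "cis (2 * pi * \<xi> * boas_node S k)" "cis (- (2 * pi * \<xi> * boas_node S k))"]
    by (simp add: norm_mult mult_left_mono)
qed

lemma fourier_transform_boas_term:
  assumes f: "integrable lborel f"
  shows "fourier_transform (\<lambda>t. boas_weight S k * (f (t + boas_node S k) - f (t - boas_node S k))) \<xi>
       = complex_of_real (boas_weight S k) *
           (cis (2 * pi * \<xi> * boas_node S k) - cis (- (2 * pi * \<xi> * boas_node S k))) * fourier_transform f \<xi>"
proof -
  have i1: "integrable lborel (\<lambda>t. complex_of_real (f (t + boas_node S k)) * cis (- 2 * pi * \<xi> * t))"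
    and i2: "integrable lborel (\<lambda>t. complex_of_real (f (t + - boas_node S k)) * cis (- 2 * pi * \<xi> * t))"
    using integrable_mult_cis[OF integrable_lborel_shift[OF f]] by (simp only:)+
  have "fourier_transform (\<lambda>t. boas_weight S k * (f (t + boas_node S k) - f (t - boas_node S k))) \<xi>
      = complex_of_real (boas_weight S k) *
        ((LINT t|lborel. complex_of_real (f (t + boas_node S k)) * cis (- 2 * pi * \<xi> * t))
        - (LINT t|lborel. complex_of_real (f (t + - boas_node S k)) * cis (- 2 * pi * \<xi> * t)))"
    unfolding fourier_transform_def Bochner_Integration.integral_diff[OF i1 i2, symmetric]
      integral_mult_right_zero[symmetric]
    by (intro Bochner_Integration.integral_cong) (auto simp: algebra_simps)
  also have "\<dots> = complex_of_real (boas_weight S k) *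
      (fourier_transform (\<lambda>t. f (t + boas_node S k)) \<xi> - fourier_transform (\<lambda>t. f (t + - boas_node S k)) \<xi>)"
    unfolding fourier_transform_def ..
  finally show ?thesis
    unfolding fourier_transform_shift by (simp add: algebra_simps)
qed

lemma fourier_transform_boas_operator:
  assumes S: "0 < S" and f: "integrable lborel f" and bound: "\<And>x. \<bar>f x\<bar> \<le> B"
  shows "fourier_transform (boas_operator S f) \<xi> = boas_multiplier S \<xi> * fourier_transform f \<xi>"
proof -
  define g where "g k t = boas_weight S k * (f (t + boas_node S k) - f (t - boas_node S k))" for k t
  define \<phi> where "\<phi> k t = complex_of_real (g k t) * cis (- 2 * pi * \<xi> * t)" for k t
  have g_summable: "summable (\<lambda>k. \<bar>g k t\<bar>)" for t
    unfolding g_def by (rule summable_abs_boas_terms[OF S bound])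
  have norm_\<phi>: "norm (\<phi> k t) = \<bar>g k t\<bar>" for k t
    by (simp add: \<phi>_def norm_mult)
  have sum_\<phi>: "(\<Sum>k. \<phi> k t) = complex_of_real (boas_operator S f t) * cis (- 2 * pi * \<xi> * t)" for t
  proof -
    have "summable (\<lambda>k. g k t)" using g_summable[of t] by (rule summable_rabs_cancel)
    then show ?thesis
      unfolding \<phi>_def boas_operator_def g_def[symmetric]
      by (simp add: suminf_mult2[symmetric] summable_of_real suminf_of_real)
  qed
  have "fourier_transform (boas_operator S f) \<xi> = (LINT t|lborel. (\<Sum>k. \<phi> k t))"
    unfolding fourier_transform_def sum_\<phi> ..
  also have "\<dots> = (\<Sum>k. LINT t|lborel. \<phi> k t)"
  proof (rule integral_suminf)
    show "integrable lborel (\<phi> k)" for k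
      unfolding \<phi>_def[abs_def] g_def by (rule integrable_mult_cis[OF integrable_boas_term[OF f]])
    show "AE t in lborel. summable (\<lambda>k. norm (\<phi> k t))"
      using g_summable unfolding norm_\<phi> by simp
    show "summable (\<lambda>k. LINT t|lborel. norm (\<phi> k t))"
      using summable_L1_boas_terms[OF S f] unfolding norm_\<phi> g_def by simp
  qed
  also have "\<dots> = boas_multiplier S \<xi> * fourier_transform f \<xi>"
    using fourier_transform_boas_term[OF f, of S _ \<xi>]
    unfolding boas_multiplier_def fourier_transform_def \<phi>_def g_def
    by (simp add: suminf_mult2[OF summable_boas_multiplier[OF S]])
  finally show ?thesis .
qed

lemma continuous_le_if_AE_le:
  fixes g :: "real \<Rightarrow> real"
  assumes g: "continuous_on UNIV g" and ae: "AE t in lborel. g t \<le> C"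
  shows "g t \<le> C"
proof (rule ccontr)
  assume "\<not> g t \<le> C"
  then have "t \<in> {x. C < g x}" by simp
  moreover have "open {x. C < g x}" by (intro open_Collect_less continuous_intros g)
  ultimately obtain e where e: "0 < e" "ball t e \<subseteq> {x. C < g x}" by (meson open_contains_ball)
  from ae obtain N where N: "{x \<in> space lborel. \<not> g x \<le> C} \<subseteq> N" "N \<in> null_sets lborel"
    unfolding eventually_ae_filter by blast
  have "emeasure lborel (ball t e) \<le> emeasure lborel N"
    using e(2) N by (intro emeasure_mono) force+
  moreover have "emeasure lborel N = 0" using N(2) by auto
  ultimately show False using e(1) by (simp add: ball_eq_greaterThanLessThan)
qed

lemma integrable_abs_le_inverse_1_plus_square:
  fixes f :: "real \<Rightarrow> real"
  assumes f: "f \<in> borel_measurable borel" and bound: "\<And>t. \<bar>f t\<bar> \<le> A / (1 + t\<^sup>2)"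
  shows "integrable lborel f"
proof (rule Bochner_Integration.integrable_bound)
  have "integrable lborel (\<lambda>x::real. inverse (1 + x^2))"
    using integrable_inverse_1_plus_square unfolding set_integrable_def by (simp add: einterval_def)
  then show "integrable lborel (\<lambda>x. A * inverse (1 + x^2))" by (rule integrable_mult_right)
  show "AE x in lborel. norm (f x) \<le> norm (A * inverse (1 + x\<^sup>2))"
    using bound by (auto simp: divide_inverse intro: order_trans[OF _ abs_ge_self])
qed (use f in simp)

lemma bandlimited_increment_bound:
  fixes f :: "real \<Rightarrow> real"
  assumes f: "integrable lborel f" "continuous_on UNIV f" and band: "bandlimited \<sigma> f"
    and bound: "\<And>t. \<bar>f t\<bar> \<le> B" and \<sigma>': "0 < \<sigma>'" "\<sigma> < \<sigma>'" and h: "0 \<le> h"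
  shows "\<bar>f (t + h) - f t\<bar> \<le> h * (\<sigma>' * B)"
proof -
  define S where "S = \<sigma>' / (2 * pi)"
  have S: "0 < S" using \<sigma>' by (simp add: S_def)
  have \<sigma>_S: "\<sigma> / (2 * pi) < S" using \<sigma>' by (simp add: S_def divide_strict_right_mono)
  define P where "P = boas_operator S f"
  have P: "integrable lborel P" unfolding P_def by (rule integrable_boas_operator[OF S f(1) bound])
  have P_bound: "\<bar>P x\<bar> \<le> \<sigma>' * B" for x
    using abs_boas_operator_le[OF S bound, where t = x] by (simp add: P_def S_def)
  define R where "R t = (LINT \<tau>|lborel. indicator {0..h} \<tau> * P (t + \<tau>))" for t
  define D where "D t = f (t + h) - f t" for t
  have R: "integrable lborel R" unfolding R_def by (rule integrable_moving_integral[OF P])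
  have D: "integrable lborel D"
    unfolding D_def using integrable_lborel_shift[OF f(1)] f(1) by (rule Bochner_Integration.integrable_diff)
  have "fourier_transform (\<lambda>t. D t - R t) \<xi> = 0" for \<xi>
  proof -
    have "fourier_transform D \<xi> = (cis (2 * pi * \<xi> * h) - 1) * fourier_transform f \<xi>"
      unfolding D_def fourier_transform_diff[OF integrable_lborel_shift[OF f(1)] f(1)] fourier_transform_shift
      by (simp add: algebra_simps)
    moreover have "fourier_transform R \<xi> = (CLINT \<tau>|lborel. indicator {0..h} \<tau> * cis (2 * pi * \<xi> * \<tau>))
        * (boas_multiplier S \<xi> * fourier_transform f \<xi>)"
      unfolding R_def fourier_transform_moving_integral[OF P]
      by (simp only: P_def fourier_transform_boas_operator[OF S f(1) bound])
    moreover have "fourier_transform f \<xi> = 0 \<or> boas_multiplier S \<xi> = 2 * pi * \<i> * complex_of_real \<xi>"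
      using band boas_multiplier_eq[OF S, of \<xi>] \<sigma>_S unfolding bandlimited_def by force
    ultimately show ?thesis
      unfolding fourier_transform_diff[OF D R] using times_integral_indicator_Icc_cis[OF h, of \<xi>]
      by (auto simp: mult_ac)
  qed
  then have "AE t in lborel. D t - R t = 0"
    by (intro fourier_transform_eq_0_imp_AE_0 Bochner_Integration.integrable_diff D R)
  then have "AE t in lborel. \<bar>f (t + h) - f t\<bar> \<le> h * (\<sigma>' * B)"
    by eventually_elim (use abs_moving_integral_le[OF P P_bound h] in \<open>simp add: D_def R_def\<close>)
  then show ?thesis
    by (rule continuous_le_if_AE_le[rotated]) (intro continuous_intros continuous_on_compose2[OF f(2)] f(2); simp)
qed

lemma bandlimited_lipschitz:
  fixes f :: "real \<Rightarrow> real"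
  assumes "integrable lborel f" "continuous_on UNIV f" "bandlimited \<sigma> f"
    "\<And>t. \<bar>f t\<bar> \<le> B" "0 < \<sigma>'" "\<sigma> < \<sigma>'"
  shows "\<bar>f y - f x\<bar> \<le> \<sigma>' * B * \<bar>y - x\<bar>"
proof (cases "x \<le> y")
  case True
  then show ?thesis
    using bandlimited_increment_bound[OF assms, of "y - x" x] by (simp add: mult_ac)
next
  case False
  then show ?thesis
    using bandlimited_increment_bound[OF assms, of "x - y" y] by (simp add: mult_ac abs_minus_commute)
qed


section \<open>Perturbations of linear maps\<close>

lemma strict_mono_linear_plus_lipschitz:
  fixes f :: "real \<Rightarrow> real"
  assumes lip: "\<And>x y. \<bar>f y - f x\<bar> \<le> L * \<bar>y - x\<bar>" and L: "L < \<alpha>"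
  shows "strict_mono (\<lambda>t. \<alpha> * t + f t)"
proof (rule strict_monoI)
  fix x y :: real
  assume "x < y"
  then have "f x - f y < \<alpha> * (y - x)"
    using lip[of y x] L by (smt (verit) mult_strict_right_mono)
  then show "\<alpha> * x + f x < \<alpha> * y + f y" by (simp add: algebra_simps)
qed

lemma surj_linear_plus_bounded:
  fixes f :: "real \<Rightarrow> real"
  assumes f: "continuous_on UNIV f" and bound: "\<And>t. \<bar>f t\<bar> \<le> B" and \<alpha>: "0 < \<alpha>"
  shows "surj (\<lambda>t. \<alpha> * t + f t)"
  unfolding surj_def
proof
  fix u
  have "\<exists>x. (u - B) / \<alpha> \<le> x \<and> x \<le> (u + B) / \<alpha> \<and> \<alpha> * x + f x = u"
  proof (rule IVT')
    show "\<alpha> * ((u - B) / \<alpha>) + f ((u - B) / \<alpha>) \<le> u"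
      using \<alpha> bound[of "(u - B) / \<alpha>"] by simp
    show "u \<le> \<alpha> * ((u + B) / \<alpha>) + f ((u + B) / \<alpha>)"
      using \<alpha> bound[of "(u + B) / \<alpha>"] by simp
    show "(u - B) / \<alpha> \<le> (u + B) / \<alpha>"
      using \<alpha> bound[of 0] by (simp add: divide_right_mono)
    show "continuous_on {(u - B) / \<alpha>..(u + B) / \<alpha>} (\<lambda>t. \<alpha> * t + f t)"
      by (intro continuous_intros continuous_on_subset[OF f]) simp
  qed
  then show "\<exists>x. u = \<alpha> * x + f x" by metis
qed

lemma linear_plus_bandlimited_increasing_bijection:
  fixes f :: "real \<Rightarrow> real"
  assumes "0 < \<sigma>" "0 < A" "A * \<sigma> < \<alpha>"
    and f: "continuous_on UNIV f" "bandlimited \<sigma> f" and decay: "\<And>t. \<bar>f t\<bar> \<le> A / (1 + t\<^sup>2)"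
  shows "strict_mono (\<lambda>t. \<alpha> * t + f t)" "surj (\<lambda>t. \<alpha> * t + f t)"
proof -
  define \<sigma>' where "\<sigma>' = (\<sigma> + \<alpha> / A) / 2"
  have A\<sigma>: "0 < A * \<sigma>" using assms(1,2) by simp
  then have "0 < \<alpha>" using assms(3) by linarith
  have "\<sigma> < \<alpha> / A" using assms(2,3) by (simp add: field_simps mult.commute)
  then have \<sigma>': "0 < \<sigma>'" "\<sigma> < \<sigma>'" "\<sigma>' * A < \<alpha>"
    using assms(1,2) \<open>0 < \<alpha>\<close> by (simp_all add: \<sigma>'_def field_simps) (use A\<sigma> in linarith)
  have bound: "\<bar>f t\<bar> \<le> A" for t
  proof -
    have "A / (1 + t\<^sup>2) \<le> A / 1"
      by (rule divide_left_mono) (use assms(2) in \<open>auto intro: add_pos_nonneg\<close>)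
    then show ?thesis using decay[of t] by simp
  qed
  have "integrable lborel f"
    using decay f(1) by (intro integrable_abs_le_inverse_1_plus_square borel_measurable_continuous_onI)
  from bandlimited_lipschitz[OF this f bound \<sigma>'(1,2)] \<sigma>'(3)
  show "strict_mono (\<lambda>t. \<alpha> * t + f t)"
    by (intro strict_mono_linear_plus_lipschitz[where L = "\<sigma>' * A"]) auto
  show "surj (\<lambda>t. \<alpha> * t + f t)"
    using \<open>0 < \<alpha>\<close> by (intro surj_linear_plus_bounded[OF f(1) bound])
qed

theorem mainTheorem9:
  fixes \<sigma> A \<alpha> :: real and f1 f2 :: "real \<Rightarrow> real"
  assumes "\<sigma> > 0" and "A > 0" and "\<alpha> > A * \<sigma>"
    and "continuous_on UNIV f1" and "continuous_on UNIV f2"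
    and "bandlimited \<sigma> f1" and "bandlimited \<sigma> f2"
    and "\<And>t. \<bar>f1 t\<bar> \<le> A / (1 + t\<^sup>2)"
    and "\<And>t. \<bar>f2 t\<bar> \<le> A / (1 + t\<^sup>2)"
  shows "L1_norm (\<lambda>u. (inv (\<lambda>t. \<alpha> * t + f1 t) u - u / \<alpha>)
                     - (inv (\<lambda>t. \<alpha> * t + f2 t) u - u / \<alpha>))
         = L1_norm (\<lambda>t. f1 t - f2 t)"
proof -
  note g1 = linear_plus_bandlimited_increasing_bijection[OF assms(1-3) assms(4,6,8)]
  note g2 = linear_plus_bandlimited_increasing_bijection[OF assms(1-3) assms(5,7,9)]
  show ?thesis
    using nn_integral_abs_diff_inv[OF g1(1) g2(1) g1(2) g2(2)] unfolding L1_norm_def by simp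
qed

end
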